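(* Let $P_{2n+1}$ be the path on $2n+1\geq 5$ vertices with adjacency matrix $A$ and endpoints $u,v$, and let $Q=\mathrm{diag}(Q_1,\dots,Q_n,Q_{n+1},Q_n,\dots,Q_1)$ be any symmetric real potential. Then perfect state transfer from $u$ to $v$ for the Hamiltonian $H = A - Q$ cannot occur, for any values of $Q_1,\dots,Q_{n+1}$.
   Context: With $U(t) = e^{itH}$, perfect state transfer from $u$ to $v$ occurs at time $T$ if $|U(T)_{u,v}|=1$; the claim is that there is no such $T$. *)

theory Defs
  imports Complex_Main "Jordan_Normal_Form.Matrix"
begin

definition path_adj :: "nat \<Rightarrow> real mat" where
  "path_adj N = mat N N (\<lambda>(i, j). if i + 1 = j \<or> j + 1 = i then 1 else 0)"

definition potential :: "nat \<Rightarrow> (nat \<Rightarrow> real) \<Rightarrow> real mat" where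
  "potential N q = mat N N (\<lambda>(i, j). if i = j then q i else 0)"

definition mat_exp :: "complex mat \<Rightarrow> complex mat" where
  "mat_exp M = mat (dim_row M) (dim_col M) (\<lambda>(i, j). \<Sum>k. (M ^\<^sub>m k) $$ (i, j) / of_nat (fact k))"

definition transition :: "real mat \<Rightarrow> real \<Rightarrow> complex mat" where
  "transition H t = mat_exp ((\<i> * complex_of_real t) \<cdot>\<^sub>m map_mat complex_of_real H)"

end

theory Submission
  imports Defs "HOL-Computational_Algebra.Fundamental_Theorem_Algebra"
begin

text \<open>
  Let P_k be the characteristic polynomial of the leading k \<times> k block of H. The eigenvalues of H
  are the 2n+1 simple real roots y of P_{2n+1}, with eigenvectors (P_0(y), ..., P_{2n}(y)), so that
  U(T)_{uv} = \<Sum>_y e^{iTy} / P'_{2n+1}(y). Mirror symmetry makes P_{2n}(y) = 1 or -1, and the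
  weights P_{2n}(y) / P'_{2n+1}(y) are positive with sum 1; hence |U(T)_{uv}| = 1 forces
  P_{2n}(y) e^{iTy} to be constant, i.e. y = c + t m_y with integers m_y that are even exactly
  where P_{2n}(y) = 1.

  The eigenvalues of sign -1 are the n roots of P_n, those of sign +1 the n+1 roots of
  R = P_{n+1} - P_{n-1} = (x + q_n) P_n - 2 P_{n-1}. Comparing the two top coefficients of this
  identity gives \<Sum>a^2 - \<Sum>b^2 - (\<Sum>a - \<Sum>b)^2 = 4 over the roots a of R and b of P_n,
  which on the lattice reads t^2 I = 4 for an integer I. The resultant of P_n and R gives
  (t^{n(n+1)} b)^2 = 4^n for an odd integer b. For n \<ge> 2 the two are 2-adically incompatible.
\<close>

section \<open>Products of linear factors\<close>

lemma degree_prod_linear: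
  fixes S :: "'a::idom set"
  assumes "finite S"
  shows "degree (\<Prod>r\<in>S. [:-r, 1:]) = card S"
  using assms by (simp add: degree_prod_sum_eq)

lemma lead_coeff_prod_linear:
  fixes S :: "'a::idom set"
  shows "lead_coeff (\<Prod>r\<in>S. [:-r, 1:]) = 1"
  by (simp add: lead_coeff_prod)

lemma coeff_prod_linear_below_top:
  fixes S :: "'a::idom set"
  assumes "finite S" "card S = Suc c"
  shows "coeff (\<Prod>r\<in>S. [:-r, 1:]) c = - (\<Sum>r\<in>S. r)"
  using assms
proof (induction S arbitrary: c rule: finite_induct)
  case (insert a S)
  then have card: "card S = c" by simp
  show ?case
  proof (cases c)
    case 0
    then show ?thesis using card insert by simp
  next
    case (Suc c')
    have "coeff (\<Prod>r\<in>S. [:-r, 1:]) c = 1"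
      using degree_prod_linear[OF insert(1)] lead_coeff_prod_linear[of S] card by simp
    then show ?thesis using insert.IH[of c'] card Suc insert by simp
  qed
qed simp

lemma coeff_prod_linear_two_below_top:
  fixes S :: "'a::idom set"
  assumes "finite S" "card S = Suc (Suc c)"
  shows "2 * coeff (\<Prod>r\<in>S. [:-r, 1:]) c = (\<Sum>r\<in>S. r)^2 - (\<Sum>r\<in>S. r^2)"
  using assms
proof (induction S arbitrary: c rule: finite_induct)
  case (insert a S)
  then have card: "card S = Suc c" by simp
  show ?case
  proof (cases c)
    case 0
    then obtain b where "S = {b}" using card by (auto simp: card_Suc_eq)
    then show ?thesis using insert by (simp add: power2_eq_square algebra_simps)
  next
    case (Suc c')
    have "coeff (\<Prod>r\<in>S. [:-r, 1:]) c = - (\<Sum>r\<in>S. r)"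
      using coeff_prod_linear_below_top[OF insert(1) card] .
    then show ?thesis using insert.IH[of c'] card Suc insert
      by (simp add: power2_eq_square algebra_simps)
  qed
qed simp

lemma monic_eq_prod_linear:
  fixes p :: "'a::idom poly"
  assumes "finite S" "card S = degree p" "lead_coeff p = 1" "\<And>x. x \<in> S \<Longrightarrow> poly p x = 0"
  shows "p = (\<Prod>r\<in>S. [:-r, 1:])"
  using assms degree_prod_linear[of S] lead_coeff_prod_linear[of S]
  by (intro poly_eqI_degree_lead_coeff[where n = "card S" and A = S]) (auto simp: poly_prod)

lemma sum_div_pderiv_prod_linear:
  fixes Z :: "'a::field set" and f :: "'a poly"
  assumes fin: "finite Z" and card: "card Z = Suc d" and deg: "degree f \<le> d"
  shows "(\<Sum>y\<in>Z. poly f y / poly (pderiv (\<Prod>r\<in>Z. [:-r, 1:])) y) = coeff f d"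
proof -
  define L where "L y = (\<Prod>r\<in>Z - {y}. [:-r, 1:])" for y
  have deg_L: "degree (L y) = d" and lead_L: "lead_coeff (L y) = 1" if "y \<in> Z" for y
    using degree_prod_linear[of "Z - {y}"] lead_coeff_prod_linear[of "Z - {y}"] fin card that
    unfolding L_def by simp_all
  have L_self: "poly (L y) y \<noteq> 0" if "y \<in> Z" for y
    using fin unfolding L_def by (simp add: poly_prod)
  have L_other: "poly (L y) z = 0" if "y \<in> Z" "z \<in> Z" "z \<noteq> y" for y z
    using fin that unfolding L_def poly_prod by (intro prod_zero_iff[THEN iffD2]) auto
  have sum_L: "(\<Sum>y\<in>Z. g y * poly (L y) z) = g z * poly (L z) z" if "z \<in> Z" for g z
  proof -
    have "(\<Sum>y\<in>Z - {z}. g y * poly (L y) z) = 0"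
      using that L_other by (intro sum.neutral) auto
    then show ?thesis by (simp add: sum.remove[OF fin that])
  qed
  have pderiv_L: "poly (pderiv (\<Prod>r\<in>Z. [:-r, 1:])) y = poly (L y) y" if "y \<in> Z" for y
  proof -
    have "pderiv (\<Prod>r\<in>Z. [:-r, 1:]) = (\<Sum>a\<in>Z. L a)"
      unfolding pderiv_prod L_def by (simp add: pderiv_pCons)
    then show ?thesis using sum_L[OF that, of "\<lambda>_. 1"] by (simp add: poly_sum)
  qed
  \<comment> \<open>f equals its Lagrange interpolant on Z; compare coefficients of degree d.\<close>
  define g where "g = (\<Sum>y\<in>Z. smult (poly f y / poly (L y) y) (L y))"
  have "f = g"
  proof (rule poly_eqI_degree[where A = Z])
    show "poly f z = poly g z" if "z \<in> Z" for z
      unfolding g_def poly_sum poly_smult sum_L[OF that] using L_self[OF that] by simp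
    show "degree g < card Z"
      unfolding g_def using fin deg_L card
      by (intro le_less_trans[OF degree_sum_le]) (auto intro: order.trans[OF degree_smult_le])
  qed (use deg card in auto)
  moreover have "coeff g d = (\<Sum>y\<in>Z. poly f y / poly (L y) y)"
    unfolding g_def using deg_L lead_L by (simp add: coeff_sum)
  ultimately show ?thesis using pderiv_L by simp
qed

section \<open>Unimodular phases and lattice spectra\<close>

lemma convex_comb_of_unimodular_eq:
  fixes w :: "'a \<Rightarrow> real" and z :: "'a \<Rightarrow> complex"
  assumes fin: "finite A" and pos: "\<forall>a\<in>A. w a > 0" and total: "sum w A = 1"
    and unit: "\<forall>a\<in>A. cmod (z a) = 1"
    and norm_comb: "cmod (\<Sum>a\<in>A. of_real (w a) * z a) = 1" and a: "a \<in> A"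
  shows "z a = (\<Sum>a\<in>A. of_real (w a) * z a)"
proof -
  let ?S = "\<Sum>a\<in>A. of_real (w a) * z a"
  define u where "u b = z b * cnj ?S" for b
  have S_cnj: "?S * cnj ?S = 1"
    by (metis complex_norm_square norm_comb of_real_1 power_one)
  have unit_u: "cmod (u b) = 1" if "b \<in> A" for b
    unfolding u_def norm_mult complex_mod_cnj using unit that norm_comb by simp
  \<comment> \<open>Re u b \<le> 1 everywhere, and the weighted mean of Re u is 1.\<close>
  have "(\<Sum>b\<in>A. w b * (1 - Re (u b))) = 0"
  proof -
    have "(\<Sum>b\<in>A. of_real (w b) * u b) = 1"
      using S_cnj by (simp add: u_def sum_distrib_right mult.assoc)
    then have "Re (\<Sum>b\<in>A. of_real (w b) * u b) = 1" by simp
    then have "(\<Sum>b\<in>A. w b * Re (u b)) = 1" by (simp add: Re_sum)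
    then show ?thesis using total by (simp add: right_diff_distrib sum_subtractf)
  qed
  moreover have "\<forall>b\<in>A. 0 \<le> w b * (1 - Re (u b))"
  proof
    fix b assume "b \<in> A"
    then have "Re (u b) \<le> 1" using unit_u complex_Re_le_cmod by metis
    with pos \<open>b \<in> A\<close> show "0 \<le> w b * (1 - Re (u b))"
      by (intro mult_nonneg_nonneg) (auto simp: less_imp_le)
  qed
  ultimately have "\<forall>b\<in>A. w b * (1 - Re (u b)) = 0"
    using sum_nonneg_eq_0_iff[OF fin, of "\<lambda>b. w b * (1 - Re (u b))"] by simp
  then have "w a * (1 - Re (u a)) = 0" using a by blast
  then have "Re (u a) = 1" using pos a by force
  moreover have "(Re (u a))^2 + (Im (u a))^2 = 1"
    using cmod_power2[of "u a"] unit_u[OF a] by simp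
  ultimately have "u a = 1" by (simp add: complex_eq_iff)
  have "z a = z a * (?S * cnj ?S)" using S_cnj by simp
  also have "\<dots> = ?S * u a" unfolding u_def by (simp only: mult_ac)
  finally show ?thesis using \<open>u a = 1\<close> by simp
qed

lemma cis_eq_real:
  assumes "cis \<theta> = complex_of_real s"
  obtains m :: int where "\<theta> = of_int m * pi" and "s = (if even m then 1 else -1)"
proof -
  have "sin \<theta> = 0" and cos: "cos \<theta> = s"
    using arg_cong[OF assms, of Im] arg_cong[OF assms, of Re] by simp_all
  then obtain m :: int where "\<theta> = of_int m * pi" by (auto simp: sin_zero_iff_int2)
  moreover from this cos have "s = (if even m then 1 else -1)" by (simp add: mult.commute)
  ultimately show ?thesis by (rule that)
qed

lemma phases_quantized:
  fixes s :: "real \<Rightarrow> real"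
  assumes phase: "\<forall>y\<in>Z. complex_of_real (s y) * exp (\<i> * of_real (T * y)) = U"
    and sign: "\<forall>y\<in>Z. s y = 1 \<or> s y = -1"
    and y0: "y0 \<in> Z" "s y0 = 1" and y1: "y1 \<in> Z" "s y1 = -1"
  obtains t and m :: "real \<Rightarrow> int" where "\<forall>y\<in>Z. y = y0 + t * of_int (m y) \<and> (even (m y) \<longleftrightarrow> s y = 1)"
proof -
  have rel: "cis (T * (y - y0)) = of_real (s y)" if "y \<in> Z" for y
  proof -
    have "of_real (s y) * cis (T * y) = cis (T * y0)"
      using phase[rule_format, OF that] phase[rule_format, OF y0(1)] y0(2) by (simp add: cis_conv_exp)
    moreover have "s y * s y = 1" using sign that by auto
    ultimately have "cis (T * y) = of_real (s y) * cis (T * y0)"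
      by (metis mult.assoc mult_1 of_real_1 of_real_mult)
    then have "cis (T * y) / cis (T * y0) = of_real (s y)" by simp
    then show ?thesis by (simp add: cis_divide right_diff_distrib)
  qed
  have "\<forall>y\<in>Z. \<exists>k::int. T * (y - y0) = of_int k * pi \<and> s y = (if even k then 1 else -1)"
  proof
    fix y assume "y \<in> Z"
    from cis_eq_real[OF rel[OF this]]
    show "\<exists>k::int. T * (y - y0) = of_int k * pi \<and> s y = (if even k then 1 else -1)" by blast
  qed
  then have "\<exists>m :: real \<Rightarrow> int. \<forall>y\<in>Z. T * (y - y0) = of_int (m y) * pi \<and> s y = (if even (m y) then 1 else -1)"
    by (rule bchoice)
  then obtain m :: "real \<Rightarrow> int"
    where m: "\<forall>y\<in>Z. T * (y - y0) = of_int (m y) * pi \<and> s y = (if even (m y) then 1 else -1)"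
    by blast
  have "T \<noteq> 0"
  proof
    assume "T = 0"
    then have "m y1 = 0" using m y1(1) by simp
    then show False using m y1 by simp
  qed
  have "\<forall>y\<in>Z. y = y0 + pi / T * of_int (m y) \<and> (even (m y) \<longleftrightarrow> s y = 1)"
    using m \<open>T \<noteq> 0\<close> by (auto simp: field_simps)
  then show ?thesis by (rule that)
qed

definition square_excess :: "'a set \<Rightarrow> 'a set \<Rightarrow> ('a \<Rightarrow> 'b::comm_ring_1) \<Rightarrow> 'b" where
  "square_excess A B f = (\<Sum>y\<in>A. (f y)^2) - (\<Sum>y\<in>B. (f y)^2) - ((\<Sum>y\<in>A. f y) - (\<Sum>y\<in>B. f y))^2"

lemma square_excess_cong:
  assumes "\<And>y. y \<in> A \<union> B \<Longrightarrow> f y = g y"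
  shows "square_excess A B f = square_excess A B g"
proof -
  have "(\<Sum>y\<in>X. h (f y)) = (\<Sum>y\<in>X. h (g y))" if "X \<subseteq> A \<union> B" for X and h :: "'b \<Rightarrow> 'b"
    using assms that by (intro sum.cong) auto
  from this[of A "\<lambda>x. x"] this[of B "\<lambda>x. x"] this[of A "\<lambda>x. x^2"] this[of B "\<lambda>x. x^2"]
  show ?thesis unfolding square_excess_def by simp
qed

lemma square_excess_of_int:
  "square_excess A B (\<lambda>y. of_int (m y)) = (of_int (square_excess A B m) :: 'b::comm_ring_1)"
  by (simp add: square_excess_def)

lemma square_excess_affine:
  fixes f :: "'a \<Rightarrow> real"
  assumes "card A = Suc (card B)"
  shows "square_excess A B (\<lambda>y. c + t * f y) = t^2 * square_excess A B f"
proof -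
  have sq: "(\<Sum>y\<in>X. (c + t * f y)^2) = card X * c^2 + 2 * c * t * (\<Sum>y\<in>X. f y) + t^2 * (\<Sum>y\<in>X. (f y)^2)"
    for X :: "'a set"
  proof -
    have "(\<Sum>y\<in>X. (c + t * f y)^2) = (\<Sum>y\<in>X. c^2 + (2 * c * t) * f y + t^2 * (f y)^2)"
      by (intro sum.cong) (simp_all add: power2_eq_square algebra_simps)
    then show ?thesis by (simp add: sum.distrib flip: sum_distrib_left)
  qed
  have lin: "(\<Sum>y\<in>X. c + t * f y) = card X * c + t * (\<Sum>y\<in>X. f y)" for X :: "'a set"
    by (simp add: sum.distrib flip: sum_distrib_left)
  show ?thesis
    unfolding square_excess_def sq lin using assms by (simp add: power2_eq_square algebra_simps)
qed

text \<open>With v the 2-adic valuation of i, the two sides have valuations 2n(n+1) and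
  2n + n(n+1) v, which would force (n+1)(2-v) = 2.\<close>

lemma four_pow_odd_square_neq:
  fixes b i :: int
  assumes n: "n \<ge> 2" and b: "odd b"
  shows "4 ^ (n * (n + 1)) * b^2 \<noteq> 4 ^ n * i ^ (n * (n + 1))"
proof
  assume "4 ^ (n * (n + 1)) * b^2 = 4 ^ n * i ^ (n * (n + 1))"
  moreover have "(4::int) ^ (n * (n + 1)) = 4 ^ n * 4 ^ (n * n)"
    by (simp add: algebra_simps flip: power_add)
  ultimately have eq: "4 ^ (n * n) * b^2 = i ^ (n * (n + 1))"
    by (simp add: mult.assoc)
  define M where "M = n * (n + 1)"
  define e where "e = n * n - n"
  have "2 * n \<le> n * n" using mult_le_mono1[OF n] .
  moreover have "M = n * n + n" unfolding M_def by simp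
  ultimately have "2 * (n * n) = M + e" and "M = e + 2 * n" and "e \<ge> 1" and M: "M \<ge> 1"
    using n unfolding e_def by linarith+
  have four: "(4::int) ^ k = 2 ^ (2 * k)" for k by (simp add: power_mult)
  show False
  proof (cases "even i")
    case False
    then have "odd (i ^ M)" by simp
    moreover have "even ((4::int) ^ (n * n) * b^2)" using n by simp
    ultimately show False using eq unfolding M_def by simp
  next
    case True
    then obtain j where j: "i = 2 * j" by blast
    have "2 ^ M * (2 ^ e * b^2) = (2::int) ^ M * j ^ M"
      using eq \<open>2 * (n * n) = M + e\<close> unfolding four j M_def[symmetric]
      by (simp add: power_add power_mult_distrib mult.assoc)
    then have ej: "2 ^ e * b^2 = j ^ M" by simp
    moreover have "even ((2::int) ^ e * b^2)" using \<open>e \<ge> 1\<close> by simp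
    ultimately have "even (j ^ M)" by simp
    then obtain k where k: "j = 2 * k" using M by auto
    have "2 ^ e * b^2 = (2::int) ^ e * (2 ^ (2 * n) * k ^ M)"
      using ej \<open>M = e + 2 * n\<close> unfolding k by (simp add: power_add power_mult_distrib mult_ac)
    then have "b^2 = 2 ^ (2 * n) * k ^ M" by simp
    then have "even (b^2)" using n by simp
    then show False using b by simp
  qed
qed

lemma prod_diff_lattice:
  fixes m :: "real \<Rightarrow> int"
  assumes lattice: "\<forall>y\<in>A \<union> B. y = c + t * of_int (m y)"
  shows "(\<Prod>v\<in>B. \<Prod>u\<in>A. v - u) = t ^ (card A * card B) * of_int (\<Prod>v\<in>B. \<Prod>u\<in>A. m v - m u)"
proof -
  have "(\<Prod>v\<in>B. \<Prod>u\<in>A. v - u) = (\<Prod>v\<in>B. \<Prod>u\<in>A. t * of_int (m v - m u))"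
  proof (intro prod.cong refl)
    fix v u assume "v \<in> B" "u \<in> A"
    then have "v = c + t * of_int (m v)" "u = c + t * of_int (m u)" using lattice by auto
    then show "v - u = t * of_int (m v - m u)"
      unfolding of_int_diff right_diff_distrib by linarith
  qed
  also have "\<dots> = t ^ (card A * card B) * of_int (\<Prod>v\<in>B. \<Prod>u\<in>A. m v - m u)"
    by (simp add: prod.distrib power_mult)
  finally show ?thesis .
qed

lemma lattice_spectrum_impossible:
  fixes A B :: "real set" and m :: "real \<Rightarrow> int"
  assumes fin: "finite A" "finite B" and card: "card A = Suc n" "card B = n" and n: "n \<ge> 2"
    and lattice: "\<forall>y\<in>A \<union> B. y = c + t * of_int (m y)"
    and parity: "\<forall>y\<in>A. even (m y)" "\<forall>y\<in>B. odd (m y)"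
    and trace: "square_excess A B (\<lambda>y. y) = 4"
    and resultant: "(\<Prod>v\<in>B. \<Prod>u\<in>A. v - u)^2 = 4 ^ n"
  shows False
proof -
  define I where "I = square_excess A B m"
  define b where "b = (\<Prod>v\<in>B. \<Prod>u\<in>A. m v - m u)"
  define M where "M = n * (n + 1)"
  have "square_excess A B (\<lambda>y. y) = square_excess A B (\<lambda>y. c + t * of_int (m y))"
    using lattice by (intro square_excess_cong) auto
  then have tI: "t^2 * of_int I = 4"
    using trace card unfolding I_def by (simp add: square_excess_affine square_excess_of_int)
  have "(t ^ M * of_int b)^2 = 4 ^ n"
    using resultant prod_diff_lattice[OF lattice] card unfolding b_def M_def by (simp add: mult.commute)
  then have "(t^2) ^ M * (of_int b)^2 = 4 ^ n"
    by (simp add: power_mult_distrib power_mult[symmetric] mult.commute)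
  then have "(t^2 * of_int I) ^ M * (of_int b)^2 = 4 ^ n * (of_int I) ^ M"
    by (simp add: power_mult_distrib mult_ac)
  then have "4 ^ M * (of_int b)^2 = 4 ^ n * (of_int I :: real) ^ M"
    unfolding tI .
  then have "of_int (4 ^ M * b^2) = (of_int (4 ^ n * I ^ M) :: real)"
    by simp
  then have "4 ^ (n * (n + 1)) * b^2 = 4 ^ n * I ^ (n * (n + 1))"
    unfolding M_def by (simp only: of_int_eq_iff)
  moreover have "odd b"
    using parity fin unfolding b_def by (auto simp: even_prod_iff)
  ultimately show False using four_pow_odd_square_neq[OF n] by blast
qed

section \<open>The characteristic polynomials of the path\<close>

text \<open>path_poly q k = det (x I - H_k) for the leading k \<times> k block H_k of H = A - Q,
  by expansion along the last row.\<close>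

fun path_poly :: "(nat \<Rightarrow> 'a::comm_ring_1) \<Rightarrow> nat \<Rightarrow> 'a poly" where
  "path_poly q 0 = 1"
| "path_poly q (Suc 0) = [:q 0, 1:]"
| "path_poly q (Suc (Suc k)) = [:q (Suc k), 1:] * path_poly q (Suc k) - path_poly q k"

lemma degree_lead_coeff_path_poly:
  fixes q :: "nat \<Rightarrow> 'a::idom"
  shows "degree (path_poly q k) = k \<and> coeff (path_poly q k) k = 1"
proof (induction q k rule: path_poly.induct)
  case (3 q k)
  let ?p = "[:q (Suc k), 1:] * path_poly q (Suc k)"
  have "degree ?p = Suc (Suc k)"
    using 3 by (subst degree_mult_eq) auto
  then have "degree (?p - path_poly q k) = Suc (Suc k)"
    using 3 unfolding diff_conv_add_uminus by (subst degree_add_eq_left) auto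
  moreover have "coeff (?p - path_poly q k) (Suc (Suc k)) = 1"
    using 3 by (simp add: coeff_eq_0)
  ultimately show ?case by simp
qed auto

lemma degree_path_poly [simp]: "degree (path_poly (q :: nat \<Rightarrow> 'a::idom) k) = k"
  using degree_lead_coeff_path_poly by blast

lemma coeff_path_poly_self [simp]: "coeff (path_poly (q :: nat \<Rightarrow> 'a::idom) k) k = 1"
  using degree_lead_coeff_path_poly by blast

lemma path_poly_nonzero [simp]: "path_poly (q :: nat \<Rightarrow> 'a::idom) k \<noteq> 0"
  by (metis coeff_0 coeff_path_poly_self zero_neq_one)

lemma poly_path_poly_Suc:
  "poly (path_poly q (Suc i)) x = (x + q i) * poly (path_poly q i) x - (if i = 0 then 0 else poly (path_poly q (i - 1)) x)"
  by (cases i) (simp_all add: algebra_simps)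

lemma poly_path_poly_of_real:
  "poly (path_poly (of_real \<circ> q) k) (of_real x) = (of_real (poly (path_poly q k) x) :: 'a::{real_algebra_1,comm_ring_1})"
  by (induction q k rule: path_poly.induct) (simp_all add: algebra_simps)

lemma poly_pderiv_path_poly_of_real:
  "poly (pderiv (path_poly (of_real \<circ> q) k)) (of_real x) = (of_real (poly (pderiv (path_poly q k)) x) :: 'a::{real_algebra_1,idom})"
  by (induction q k rule: path_poly.induct)
    (simp_all add: pderiv_add pderiv_diff pderiv_smult pderiv_mult pderiv_pCons
      poly_path_poly_of_real[unfolded comp_def] algebra_simps)

lemma pderiv_path_poly_christoffel_darboux:
  fixes q :: "nat \<Rightarrow> 'a::idom"
  shows "pderiv (path_poly q (Suc m)) * path_poly q m - path_poly q (Suc m) * pderiv (path_poly q m)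
     = (\<Sum>k\<le>m. (path_poly q k)^2)"
proof (induction m)
  case 0
  then show ?case by (simp add: pderiv_pCons)
next
  case (Suc m)
  have step: "pderiv (L * A - B) * A - (L * A - B) * pderiv A = A^2 + (pderiv A * B - A * pderiv B)"
    if "pderiv L = 1" for L A B :: "'a poly"
    using that by (simp add: pderiv_mult pderiv_diff algebra_simps power2_eq_square)
  have "pderiv [:q (Suc m), 1:] = 1" by (simp add: pderiv_pCons)
  then have "pderiv (path_poly q (Suc (Suc m))) * path_poly q (Suc m)
      - path_poly q (Suc (Suc m)) * pderiv (path_poly q (Suc m))
    = (path_poly q (Suc m))^2
      + (pderiv (path_poly q (Suc m)) * path_poly q m - path_poly q (Suc m) * pderiv (path_poly q m))"
    unfolding path_poly.simps(3) by (rule step)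
  then show ?case using Suc.IH by simp
qed

lemma path_poly_christoffel_darboux_cnj:
  fixes q :: "nat \<Rightarrow> real"
  shows "(z - cnj z) * (\<Sum>k\<le>m. poly (path_poly (of_real \<circ> q) k) z * cnj (poly (path_poly (of_real \<circ> q) k) z))
    = poly (path_poly (of_real \<circ> q) (Suc m)) z * cnj (poly (path_poly (of_real \<circ> q) m) z)
      - cnj (poly (path_poly (of_real \<circ> q) (Suc m)) z) * poly (path_poly (of_real \<circ> q) m) z"
proof (induction m)
  case 0
  then show ?case by (simp add: algebra_simps)
next
  case (Suc m)
  then show ?case
    by (simp add: sum.atMost_Suc distrib_left algebra_simps)
qed

lemma path_poly_complex_root_real:
  fixes q :: "nat \<Rightarrow> real" and z :: complex
  assumes root: "poly (path_poly (of_real \<circ> q) m) z = 0"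
  shows "z \<in> \<real>"
proof (cases m)
  case (Suc k)
  let ?S = "\<Sum>j\<le>k. poly (path_poly (of_real \<circ> q) j) z * cnj (poly (path_poly (of_real \<circ> q) j) z)"
  have "(z - cnj z) * ?S = 0"
    using path_poly_christoffel_darboux_cnj[where z = z and m = k] root Suc by simp
  moreover have "?S \<noteq> 0"
  proof -
    have "Re ?S = (\<Sum>j\<le>k. (cmod (poly (path_poly (of_real \<circ> q) j) z))^2)"
      by (simp add: complex_mult_cnj cmod_power2)
    also have "\<dots> \<ge> (cmod (poly (path_poly (of_real \<circ> q) 0) z))^2"
      by (rule member_le_sum) auto
    finally have "Re ?S \<ge> 1" by simp
    then show ?thesis by (metis not_one_le_zero zero_complex.sel(1))
  qed
  ultimately show ?thesis by (simp add: Reals_cnj_iff)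
qed (use root in simp)

lemma path_poly_root_pderiv_pos:
  fixes q :: "nat \<Rightarrow> real"
  assumes "poly (path_poly q (Suc m)) x = 0"
  shows "poly (pderiv (path_poly q (Suc m))) x * poly (path_poly q m) x > 0"
proof -
  have "poly (pderiv (path_poly q (Suc m))) x * poly (path_poly q m) x = (\<Sum>k\<le>m. (poly (path_poly q k) x)^2)"
    using arg_cong[OF pderiv_path_poly_christoffel_darboux[of q m], of "\<lambda>p. poly p x"] assms
    by (simp add: poly_sum)
  also have "\<dots> \<ge> (poly (path_poly q 0) x)^2"
    by (rule member_le_sum) auto
  finally show ?thesis by simp
qed

lemma rsquarefree_path_poly_of_real:
  fixes q :: "nat \<Rightarrow> real"
  shows "rsquarefree (path_poly (of_real \<circ> q) m :: complex poly)"
  unfolding rsquarefree_roots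
proof (intro allI notI)
  fix z :: complex assume z: "poly (path_poly (of_real \<circ> q) m) z = 0 \<and> poly (pderiv (path_poly (of_real \<circ> q) m)) z = 0"
  then obtain x where x: "z = of_real x"
    using path_poly_complex_root_real by (blast elim: Reals_cases)
  show False
  proof (cases m)
    case 0
    with z show False by simp
  next
    case (Suc k)
    have "poly (path_poly q m) x = 0" "poly (pderiv (path_poly q m)) x = 0"
      using z unfolding x by (simp_all add: poly_path_poly_of_real poly_pderiv_path_poly_of_real)
    with path_poly_root_pderiv_pos[of q k x] Suc show False by simp
  qed
qed

definition path_spectrum :: "(nat \<Rightarrow> real) \<Rightarrow> nat \<Rightarrow> real set" where
  "path_spectrum q m = {x. poly (path_poly q m) x = 0}"

lemma finite_path_spectrum [simp]: "finite (path_spectrum q m)"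
  unfolding path_spectrum_def by (rule poly_roots_finite[OF path_poly_nonzero])

lemma card_path_spectrum [simp]: "card (path_spectrum q m) = m"
proof -
  let ?p = "path_poly (of_real \<circ> q) m :: complex poly"
  have roots: "{z. poly ?p z = 0} = of_real ` path_spectrum q m"
  proof (intro equalityI subsetI)
    fix z assume z: "z \<in> {z. poly ?p z = 0}"
    then obtain x where "z = of_real x"
      using path_poly_complex_root_real by (blast elim: Reals_cases)
    with z show "z \<in> of_real ` path_spectrum q m"
      by (auto simp: path_spectrum_def poly_path_poly_of_real)
  qed (auto simp: path_spectrum_def poly_path_poly_of_real)
  have "?p = (\<Prod>z | poly ?p z = 0. [:-z, 1:])"
    using complex_poly_decompose_rsquarefree[OF rsquarefree_path_poly_of_real, of q m] by simp
  then have "card {z. poly ?p z = 0} = m"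
    using degree_prod_linear[OF poly_roots_finite[OF path_poly_nonzero]] by (metis degree_path_poly)
  then show ?thesis
    unfolding roots by (simp add: card_image inj_on_def)
qed

lemma path_poly_eq_prod_spectrum: "path_poly q m = (\<Prod>r\<in>path_spectrum q m. [:-r, 1:])"
  by (rule monic_eq_prod_linear) (simp_all, simp add: path_spectrum_def)

lemma poly_path_poly_prod_spectrum: "poly (path_poly q m) x = (\<Prod>r\<in>path_spectrum q m. x - r)"
  by (subst path_poly_eq_prod_spectrum) (simp add: poly_prod)

lemma prod_path_poly_over_spectrum_sq:
  "(\<Prod>r\<in>path_spectrum q (Suc m). poly (path_poly q m) r)^2 = 1"
proof (induction m)
  case 0
  then show ?case by (simp add: path_spectrum_def)
next
  case (Suc m)
  let ?A = "path_spectrum q (Suc (Suc m))" and ?B = "path_spectrum q (Suc m)"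
  have "(\<Prod>r\<in>?A. poly (path_poly q (Suc m)) r)^2 = (\<Prod>r\<in>?A. \<Prod>s\<in>?B. (r - s)^2)"
    by (simp only: poly_path_poly_prod_spectrum prod_power_distrib)
  also have "\<dots> = (\<Prod>s\<in>?B. \<Prod>r\<in>?A. (s - r)^2)"
    by (subst prod.swap) (simp add: power2_commute)
  also have "\<dots> = (\<Prod>s\<in>?B. (poly (path_poly q (Suc (Suc m))) s)^2)"
    by (simp only: poly_path_poly_prod_spectrum prod_power_distrib)
  also have "\<dots> = (\<Prod>s\<in>?B. (poly (path_poly q m) s)^2)"
  proof (rule prod.cong)
    fix s assume "s \<in> ?B"
    then have "poly (path_poly q (Suc m)) s = 0" by (simp add: path_spectrum_def)
    then show "(poly (path_poly q (Suc (Suc m))) s)^2 = (poly (path_poly q m) s)^2" by simp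
  qed simp
  also have "\<dots> = 1"
    using Suc.IH by (simp add: prod_power_distrib)
  finally show ?case .
qed

section \<open>The end-to-end amplitude\<close>

lemma pow_mat_mult_eigenvector:
  fixes A :: "'a::field mat"
  assumes A: "A \<in> carrier_mat n n" and v: "v \<in> carrier_vec n" and eigen: "A *\<^sub>v v = x \<cdot>\<^sub>v v"
  shows "A ^\<^sub>m k *\<^sub>v v = x ^ k \<cdot>\<^sub>v v"
proof (induction k)
  case 0
  then show ?case using A v by simp
next
  case (Suc k)
  have "A ^\<^sub>m Suc k *\<^sub>v v = A ^\<^sub>m k *\<^sub>v (x \<cdot>\<^sub>v v)"
    using A v eigen by (simp add: assoc_mult_mat_vec[of _ n n _ n])
  also have "\<dots> = x ^ Suc k \<cdot>\<^sub>v v"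
    using A v Suc.IH by (simp add: mult_mat_vec[of _ n n] smult_smult_assoc)
  finally show ?case .
qed

lemma smult_pow_mat:
  fixes A :: "'a::comm_ring_1 mat"
  assumes "A \<in> carrier_mat n n"
  shows "(c \<cdot>\<^sub>m A) ^\<^sub>m k = c ^ k \<cdot>\<^sub>m A ^\<^sub>m k"
proof (induction k)
  case 0
  then show ?case by (auto intro: eq_matI)
next
  case (Suc k)
  then have "(c \<cdot>\<^sub>m A) ^\<^sub>m Suc k = c \<cdot>\<^sub>m (c ^ k \<cdot>\<^sub>m (A ^\<^sub>m k * A))"
    using assms by (simp add: mult_smult_distrib[of _ n n _ n] mult_smult_assoc_mat[of _ n n _ n])
  also have "\<dots> = c ^ Suc k \<cdot>\<^sub>m A ^\<^sub>m Suc k"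
    by (intro eq_matI) auto
  finally show ?case .
qed

definition path_hamiltonian :: "nat \<Rightarrow> (nat \<Rightarrow> real) \<Rightarrow> real mat" where
  "path_hamiltonian N q = path_adj N - potential N q"

lemma path_hamiltonian_carrier [simp]: "path_hamiltonian N q \<in> carrier_mat N N"
  unfolding carrier_mat_def path_hamiltonian_def path_adj_def potential_def by simp

lemma path_hamiltonian_index:
  "i < N \<Longrightarrow> j < N \<Longrightarrow>
    path_hamiltonian N q $$ (i, j) = (if i + 1 = j \<or> j + 1 = i then 1 else 0) - (if i = j then q i else 0)"
  by (simp add: path_hamiltonian_def path_adj_def potential_def)

lemma dim_path_hamiltonian [simp]:
  "dim_row (path_hamiltonian N q) = N" "dim_col (path_hamiltonian N q) = N"
  using path_hamiltonian_carrier by blast+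

definition path_eigvec :: "nat \<Rightarrow> (nat \<Rightarrow> real) \<Rightarrow> real \<Rightarrow> real vec" where
  "path_eigvec N q x = vec N (\<lambda>i. poly (path_poly q i) x)"

lemma path_eigvec_carrier [simp]: "path_eigvec N q x \<in> carrier_vec N"
  by (simp add: path_eigvec_def)

lemma path_hamiltonian_eigvec:
  assumes root: "poly (path_poly q N) x = 0"
  shows "path_hamiltonian N q *\<^sub>v path_eigvec N q x = x \<cdot>\<^sub>v path_eigvec N q x"
proof (rule eq_vecI)
  fix i assume "i < dim_vec (x \<cdot>\<^sub>v path_eigvec N q x)"
  then have i: "i < N" by (simp add: path_eigvec_def)
  let ?P = "\<lambda>l. poly (path_poly q l) x"
  have "(path_hamiltonian N q *\<^sub>v path_eigvec N q x) $ i
      = (\<Sum>l<N. (if l = Suc i then ?P l else 0) + (if Suc l = i then ?P l else 0) - (if l = i then q i * ?P l else 0))"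
    using i by (auto simp: path_eigvec_def path_hamiltonian_index scalar_prod_def lessThan_atLeast0
        left_diff_distrib intro!: sum.cong)
  also have "\<dots> = (if Suc i < N then ?P (Suc i) else 0) + (if i = 0 then 0 else ?P (i - 1)) - q i * ?P i"
  proof -
    have "(\<Sum>l<N. if Suc l = i then ?P l else 0) = (if i = 0 then 0 else ?P (i - 1))"
      using i by (cases i) (simp_all add: sum.delta')
    then show ?thesis
      using i by (simp add: sum.distrib sum_subtractf sum.delta' del: One_nat_def)
  qed
  also have "\<dots> = x * ?P i"
  proof (cases "Suc i < N")
    case False
    with i have "N = Suc i" by simp
    with root have "?P (Suc i) = 0" by simp
    with False show ?thesis by (simp add: poly_path_poly_Suc[of q i] algebra_simps)
  qed (simp add: poly_path_poly_Suc[of q i] algebra_simps)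
  finally show "(path_hamiltonian N q *\<^sub>v path_eigvec N q x) $ i = (x \<cdot>\<^sub>v path_eigvec N q x) $ i"
    using i by (simp add: path_eigvec_def)
qed (simp add: path_eigvec_def)

lemma path_hamiltonian_pow_corner:
  "(path_hamiltonian (Suc d) q ^\<^sub>m k) $$ (0, d)
    = (\<Sum>y\<in>path_spectrum q (Suc d). y ^ k / poly (pderiv (path_poly q (Suc d))) y)"
proof -
  let ?N = "Suc d" and ?Z = "path_spectrum q (Suc d)"
  let ?H = "path_hamiltonian ?N q ^\<^sub>m k" and ?D = "\<lambda>y. poly (pderiv (path_poly q ?N)) y"
  have delta: "(\<Sum>y\<in>?Z. poly (path_poly q l) y / ?D y) = (if l = d then 1 else 0)" if "l < ?N" for l
  proof -
    have "(\<Sum>y\<in>?Z. poly (path_poly q l) y / ?D y) = coeff (path_poly q l) d"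
      using sum_div_pderiv_prod_linear[of ?Z d "path_poly q l"] that
      by (simp add: path_poly_eq_prod_spectrum[symmetric])
    also have "\<dots> = (if l = d then 1 else 0)"
      using that by (auto intro: coeff_eq_0)
    finally show ?thesis .
  qed
  have row: "(\<Sum>l<?N. ?H $$ (0, l) * poly (path_poly q l) y) = y ^ k" if "y \<in> ?Z" for y
  proof -
    have "?H *\<^sub>v path_eigvec ?N q y = y ^ k \<cdot>\<^sub>v path_eigvec ?N q y"
      using that by (intro pow_mat_mult_eigenvector[of _ ?N] path_hamiltonian_eigvec)
        (auto simp: path_spectrum_def)
    from arg_cong[OF this, of "\<lambda>v. v $ 0"] show ?thesis
      by (simp add: path_eigvec_def scalar_prod_def lessThan_atLeast0)
  qed
  have "?H $$ (0, d) = (\<Sum>l<?N. ?H $$ (0, l) * (if l = d then 1 else 0))"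
    by (simp add: sum.delta' cong: if_cong)
  also have "\<dots> = (\<Sum>l<?N. ?H $$ (0, l) * (\<Sum>y\<in>?Z. poly (path_poly q l) y / ?D y))"
    using delta by (intro sum.cong) auto
  also have "\<dots> = (\<Sum>y\<in>?Z. (\<Sum>l<?N. ?H $$ (0, l) * poly (path_poly q l) y) / ?D y)"
    by (simp only: sum_distrib_left sum_divide_distrib times_divide_eq_right, rule sum.swap)
  also have "\<dots> = (\<Sum>y\<in>?Z. y ^ k / ?D y)"
    using row by simp
  finally show ?thesis .
qed

lemma transition_path_corner:
  "transition (path_hamiltonian (Suc d) q) T $$ (0, d)
    = (\<Sum>y\<in>path_spectrum q (Suc d).
        exp (\<i> * of_real (T * y)) / of_real (poly (pderiv (path_poly q (Suc d))) y))"
proof -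
  let ?N = "Suc d" and ?Z = "path_spectrum q (Suc d)"
  let ?H = "path_hamiltonian ?N q" and ?D = "\<lambda>y. poly (pderiv (path_poly q ?N)) y"
  let ?M = "(\<i> * complex_of_real T) \<cdot>\<^sub>m map_mat complex_of_real ?H"
  have series_term: "(?M ^\<^sub>m k) $$ (0, d) / fact k = (\<Sum>y\<in>?Z. (\<i> * of_real (T * y)) ^ k / fact k / of_real (?D y))" for k
  proof -
    have "?M ^\<^sub>m k = (\<i> * complex_of_real T) ^ k \<cdot>\<^sub>m map_mat complex_of_real (?H ^\<^sub>m k)"
      by (simp add: smult_pow_mat[of _ ?N] of_real_hom.mat_hom_pow[of _ ?N])
    then show ?thesis
      by (simp add: path_hamiltonian_pow_corner sum_divide_distrib sum_distrib_left power_mult_distrib mult_ac)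
  qed
  have "(\<lambda>k. (?M ^\<^sub>m k) $$ (0, d) / fact k) sums (\<Sum>y\<in>?Z. exp (\<i> * of_real (T * y)) / of_real (?D y))"
  proof -
    have "(\<lambda>k. z ^ k / fact k) sums exp z" for z :: complex
      using exp_converges[of z] by (simp add: scaleR_conv_of_real field_simps)
    then show ?thesis unfolding series_term by (intro sums_sum sums_divide)
  qed
  moreover have "transition ?H T $$ (0, d) = (\<Sum>k. (?M ^\<^sub>m k) $$ (0, d) / fact k)"
    by (simp add: transition_def mat_exp_def)
  ultimately show ?thesis by (simp add: sums_iff)
qed

section \<open>Mirror-symmetric potentials\<close>

lemma path_poly_mirror:
  fixes q :: "nat \<Rightarrow> 'a::comm_ring_1"
  assumes sym: "\<forall>i \<le> 2 * n. q i = q (2 * n - i)"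
    and root: "poly (path_poly q (Suc (2 * n))) y = 0"
  shows "k \<le> 2 * n \<Longrightarrow>
    poly (path_poly q (2 * n - k)) y = poly (path_poly q (2 * n)) y * poly (path_poly q k) y"
proof (induction k rule: induct_nat_012)
  case 0
  then show ?case by simp
next
  case 1
  then obtain j where j: "2 * n = Suc j" by (cases "2 * n") auto
  have "q (Suc j) = q 0" using sym[rule_format, of 0] j by simp
  with root j show ?case by (simp add: algebra_simps)
next
  case (ge2 k)
  let ?P = "\<lambda>l. poly (path_poly q l) y" and ?s = "poly (path_poly q (2 * n)) y"
  define m where "m = 2 * n - Suc (Suc k)"
  have m: "2 * n - k = Suc (Suc m)" "2 * n - Suc k = Suc m"
    using ge2.prems unfolding m_def by simp_all
  have q_mirror: "q (Suc m) = q (Suc k)"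
    using sym[rule_format, of "Suc k"] ge2.prems m(2) by simp
  have "?P (2 * n - Suc (Suc k)) = (y + q (Suc m)) * ?P (Suc m) - ?P (Suc (Suc m))"
    unfolding m_def[symmetric] by (simp add: algebra_simps)
  also have "\<dots> = (y + q (Suc k)) * (?s * ?P (Suc k)) - ?s * ?P k"
  proof -
    have "?P (Suc m) = ?s * ?P (Suc k)"
      unfolding m(2)[symmetric] using ge2.IH(2) ge2.prems by simp
    moreover have "?P (Suc (Suc m)) = ?s * ?P k"
      unfolding m(1)[symmetric] using ge2.IH(1) ge2.prems by simp
    ultimately show ?thesis by (simp only: q_mirror)
  qed
  also have "\<dots> = ?s * ?P (Suc (Suc k))"
    by (simp add: algebra_simps)
  finally show ?case .
qed

lemma path_poly_mirror_sign:
  fixes q :: "nat \<Rightarrow> 'a::idom"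
  assumes sym: "\<forall>i \<le> 2 * n. q i = q (2 * n - i)"
    and root: "poly (path_poly q (Suc (2 * n))) y = 0"
  shows "poly (path_poly q (2 * n)) y = 1 \<or> poly (path_poly q (2 * n)) y = -1"
proof -
  have "(poly (path_poly q (2 * n)) y)^2 = 1"
    using path_poly_mirror[OF sym root, of "2 * n"] by (simp add: power2_eq_square)
  then show ?thesis by (simp add: power2_eq_1_iff)
qed

text \<open>The weights P_{2n}(y) / P'_{2n+1}(y) are positive and sum to 1, so the amplitude is a
  convex combination of the unimodular numbers P_{2n}(y) e^{iTy}.\<close>

lemma pst_mirror_phase:
  fixes q :: "nat \<Rightarrow> real"
  assumes sym: "\<forall>i \<le> 2 * n. q i = q (2 * n - i)"
    and pst: "cmod (transition (path_hamiltonian (Suc (2 * n)) q) T $$ (0, 2 * n)) = 1"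
    and y: "y \<in> path_spectrum q (Suc (2 * n))"
  shows "of_real (poly (path_poly q (2 * n)) y) * exp (\<i> * of_real (T * y))
    = transition (path_hamiltonian (Suc (2 * n)) q) T $$ (0, 2 * n)"
proof -
  let ?Z = "path_spectrum q (Suc (2 * n))"
  let ?s = "\<lambda>y. poly (path_poly q (2 * n)) y" and ?D = "\<lambda>y. poly (pderiv (path_poly q (Suc (2 * n)))) y"
  let ?z = "\<lambda>y. complex_of_real (?s y) * exp (\<i> * of_real (T * y))"
  define w where "w y = ?s y / ?D y" for y
  have sign: "?s y = 1 \<or> ?s y = -1" if "y \<in> ?Z" for y
    using path_poly_mirror_sign[OF sym] that by (simp add: path_spectrum_def)
  have w_pos: "\<forall>y\<in>?Z. w y > 0"
    using path_poly_root_pderiv_pos[of q "2 * n"]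
    by (auto simp: w_def path_spectrum_def zero_less_mult_iff zero_less_divide_iff)
  have w_sum: "sum w ?Z = 1"
    using sum_div_pderiv_prod_linear[of ?Z "2 * n" "path_poly q (2 * n)"]
    by (simp add: w_def path_poly_eq_prod_spectrum[symmetric])
  have corner: "transition (path_hamiltonian (Suc (2 * n)) q) T $$ (0, 2 * n) = (\<Sum>y\<in>?Z. of_real (w y) * ?z y)"
    unfolding transition_path_corner
  proof (rule sum.cong)
    fix y assume "y \<in> ?Z"
    then have "?s y * ?s y = 1" by (metis sign mult_1 mult_minus1 minus_minus)
    then show "exp (\<i> * of_real (T * y)) / of_real (?D y) = of_real (w y) * ?z y"
      by (simp add: w_def field_simps flip: of_real_mult)
  qed simp
  have "\<forall>y\<in>?Z. cmod (?z y) = 1"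
    by (auto simp: norm_mult dest!: sign)
  then show ?thesis
    using convex_comb_of_unimodular_eq[OF finite_path_spectrum w_pos w_sum _ _ y] pst corner by simp
qed

lemma degree_coeff_path_poly_Suc_diff:
  fixes q :: "nat \<Rightarrow> 'a::idom"
  shows "degree (path_poly q (Suc n) - path_poly q (n - 1)) = Suc n
    \<and> coeff (path_poly q (Suc n) - path_poly q (n - 1)) (Suc n) = 1"
proof
  show "degree (path_poly q (Suc n) - path_poly q (n - 1)) = Suc n"
    unfolding diff_conv_add_uminus by (subst degree_add_eq_left) simp_all
  show "coeff (path_poly q (Suc n) - path_poly q (n - 1)) (Suc n) = 1"
    by (simp add: coeff_eq_0)
qed

lemma mirror_path_spectrum_split:
  fixes q :: "nat \<Rightarrow> real"
  assumes sym: "\<forall>i \<le> 2 * n. q i = q (2 * n - i)" and n: "n \<ge> 1"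
  defines "R \<equiv> path_poly q (Suc n) - path_poly q (n - 1)"
  shows "{y \<in> path_spectrum q (Suc (2 * n)). poly (path_poly q (2 * n)) y = -1} = path_spectrum q n"
    and "{y \<in> path_spectrum q (Suc (2 * n)). poly (path_poly q (2 * n)) y = 1} = {x. poly R x = 0}"
    and "card {x. poly R x = 0} = Suc n"
proof -
  let ?Z = "path_spectrum q (Suc (2 * n))" and ?s = "poly (path_poly q (2 * n))"
  let ?Zm = "{y \<in> ?Z. ?s y = -1}" and ?Zp = "{y \<in> ?Z. ?s y = 1}"
  have root: "poly (path_poly q (Suc (2 * n))) y = 0" if "y \<in> ?Z" for y
    using that by (simp add: path_spectrum_def)
  have Zm_sub: "?Zm \<subseteq> path_spectrum q n"
  proof
    fix y assume y: "y \<in> ?Zm"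
    then have "poly (path_poly q (2 * n - n)) y = ?s y * poly (path_poly q n) y"
      using path_poly_mirror[OF sym root[of y], of n] by simp
    with y show "y \<in> path_spectrum q n" by (simp add: path_spectrum_def)
  qed
  have Zp_sub: "?Zp \<subseteq> {x. poly R x = 0}"
  proof
    fix y assume y: "y \<in> ?Zp"
    then have "poly (path_poly q (2 * n - (n - 1))) y = ?s y * poly (path_poly q (n - 1)) y"
      using path_poly_mirror[OF sym root[of y], of "n - 1"] by simp
    moreover have "2 * n - (n - 1) = Suc n" using n by simp
    ultimately show "y \<in> {x. poly R x = 0}" using y by (simp add: R_def)
  qed
  have "degree R = Suc n" and "R \<noteq> 0"
    using degree_coeff_path_poly_Suc_diff[of q n] unfolding R_def by auto
  then have R_roots: "finite {x. poly R x = 0}" "card {x. poly R x = 0} \<le> Suc n"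
    using poly_roots_finite card_poly_roots_bound by metis+
  have "?Zp \<union> ?Zm = ?Z"
    using path_poly_mirror_sign[OF sym root] by auto
  moreover have "card (?Zp \<union> ?Zm) = card ?Zp + card ?Zm"
    by (rule card_Un_disjoint) auto
  ultimately have "card ?Zp + card ?Zm = Suc (2 * n)" by simp
  moreover have "card ?Zm \<le> n" and "card ?Zp \<le> Suc n"
    using card_mono[OF finite_path_spectrum Zm_sub] card_mono[OF R_roots(1) Zp_sub] R_roots(2) by auto
  ultimately have "card ?Zm = n" and card_Zp: "card ?Zp = Suc n" by linarith+
  then show "?Zm = path_spectrum q n"
    using card_subset_eq[OF finite_path_spectrum Zm_sub] by simp
  show "?Zp = {x. poly R x = 0}"
    using card_subset_eq[OF R_roots(1) Zp_sub] card_Zp R_roots(2) card_mono[OF R_roots(1) Zp_sub] by simp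
  then show "card {x. poly R x = 0} = Suc n" using card_Zp by simp
qed

lemma mirror_trace_identity:
  fixes q :: "nat \<Rightarrow> real"
  assumes n: "n \<ge> 2"
  defines "R \<equiv> path_poly q (Suc n) - path_poly q (n - 1)"
  assumes card: "card {x. poly R x = 0} = Suc n"
  shows "square_excess {x. poly R x = 0} (path_spectrum q n) (\<lambda>y. y) = 4"
proof -
  define A where "A = {x. poly R x = 0}"
  let ?B = "path_spectrum q n"
  obtain k where k: "n = Suc (Suc k)" using n by (metis add_2_eq_Suc le_Suc_ex)
  have R_deg: "degree R = Suc n" and R_lead: "lead_coeff R = 1"
    using degree_coeff_path_poly_Suc_diff[of q n] unfolding R_def by auto
  have "R \<noteq> 0" using R_lead by auto
  then have finA: "finite A" unfolding A_def by (rule poly_roots_finite)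
  have R_prod: "R = (\<Prod>r\<in>A. [:-r, 1:])"
    using finA card R_deg R_lead unfolding A_def by (intro monic_eq_prod_linear) auto
  have cardA: "card A = Suc (Suc (Suc k))" and cardB: "card ?B = Suc (Suc k)"
    using card k unfolding A_def by simp_all
  have R_rec: "R = [:q n, 1:] * path_poly q n - path_poly q (n - 1) - path_poly q (n - 1)"
    unfolding R_def k by simp
  have lead_n: "coeff (path_poly q n) (Suc (Suc k)) = 1"
    using coeff_path_poly_self[of q n] by (simp only: k)
  have P_n1: "coeff (path_poly q n) (Suc k) = - (\<Sum>y\<in>?B. y)"
    by (subst path_poly_eq_prod_spectrum) (rule coeff_prod_linear_below_top[OF finite_path_spectrum cardB])
  have P_n2: "2 * coeff (path_poly q n) k = (\<Sum>y\<in>?B. y)^2 - (\<Sum>y\<in>?B. y^2)"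
    by (subst path_poly_eq_prod_spectrum) (rule coeff_prod_linear_two_below_top[OF finite_path_spectrum cardB])
  have coeff_top: "coeff R (Suc (Suc k)) = q n - (\<Sum>y\<in>?B. y)"
  proof -
    have "coeff (path_poly q (n - 1)) (Suc (Suc k)) = 0"
      using k by (auto intro: coeff_eq_0)
    then show ?thesis unfolding R_rec coeff_diff using lead_n P_n1 by simp
  qed
  have coeff_next: "2 * coeff R (Suc k) = - 2 * q n * (\<Sum>y\<in>?B. y) + (\<Sum>y\<in>?B. y)^2 - (\<Sum>y\<in>?B. y^2) - 4"
  proof -
    have "coeff (path_poly q (n - 1)) (Suc k) = 1"
      using k by simp
    then show ?thesis unfolding R_rec coeff_diff using P_n1 P_n2 by (simp add: algebra_simps)
  qed
  have sum_A: "- (\<Sum>y\<in>A. y) = q n - (\<Sum>y\<in>?B. y)"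
    using coeff_top coeff_prod_linear_below_top[OF finA cardA] unfolding R_prod by simp
  have sum_sq_A: "(\<Sum>y\<in>A. y)^2 - (\<Sum>y\<in>A. y^2) = - 2 * q n * (\<Sum>y\<in>?B. y) + (\<Sum>y\<in>?B. y)^2 - (\<Sum>y\<in>?B. y^2) - 4"
    using coeff_next coeff_prod_linear_two_below_top[OF finA cardA] unfolding R_prod by simp
  have elim_q: "QA - QB - (SA - SB)^2 = 4"
    if "- SA = c - SB" and "SA^2 - QA = - 2 * c * SB + SB^2 - QB - 4" for SA SB QA QB c :: real
  proof -
    have "c = SB - SA" using that(1) by simp
    with that(2) show ?thesis by (simp add: power2_eq_square algebra_simps)
  qed
  show ?thesis
    unfolding A_def[symmetric] square_excess_def by (rule elim_q[OF sum_A sum_sq_A])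
qed

lemma mirror_resultant:
  fixes q :: "nat \<Rightarrow> real"
  assumes n: "n \<ge> 1"
  defines "R \<equiv> path_poly q (Suc n) - path_poly q (n - 1)"
  assumes card: "card {x. poly R x = 0} = Suc n"
  shows "(\<Prod>v\<in>path_spectrum q n. \<Prod>u | poly R u = 0. v - u)^2 = 4 ^ n"
proof -
  obtain k where k: "n = Suc k" using n by (cases n) auto
  have R_deg: "degree R = Suc n" and R_lead: "lead_coeff R = 1"
    using degree_coeff_path_poly_Suc_diff[of q n] unfolding R_def by auto
  have "R \<noteq> 0" using R_lead by auto
  then have R_prod: "R = (\<Prod>r | poly R r = 0. [:-r, 1:])"
    using card R_deg R_lead by (intro monic_eq_prod_linear) (auto intro: poly_roots_finite)
  have factor: "(\<Prod>u | poly R u = 0. v - u) = - 2 * poly (path_poly q k) v"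
    if "v \<in> path_spectrum q n" for v
  proof -
    have "(\<Prod>u | poly R u = 0. v - u) = poly R v"
      by (subst (2) R_prod) (simp add: poly_prod)
    also have "\<dots> = - 2 * poly (path_poly q k) v"
      using that unfolding R_def k by (simp add: path_spectrum_def algebra_simps)
    finally show ?thesis .
  qed
  have "(\<Prod>v\<in>path_spectrum q n. \<Prod>u | poly R u = 0. v - u)
      = (\<Prod>v\<in>path_spectrum q n. - 2 * poly (path_poly q k) v)"
    by (rule prod.cong) (simp_all add: factor)
  also have "\<dots> = (- 2) ^ n * (\<Prod>v\<in>path_spectrum q n. poly (path_poly q k) v)"
    by (simp only: prod.distrib prod_constant card_path_spectrum)
  moreover have "((- 2 :: real) ^ n)^2 = 4 ^ n"
    by (simp flip: power_mult power_mult_distrib add: mult.commute[of n] power_mult)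
  ultimately show ?thesis
    using prod_path_poly_over_spectrum_sq[of q k] unfolding k by (simp add: power_mult_distrib)
qed

lemma pst_mirror_lattice:
  fixes q :: "nat \<Rightarrow> real"
  assumes sym: "\<forall>i \<le> 2 * n. q i = q (2 * n - i)" and n: "n \<ge> 1"
    and pst: "cmod (transition (path_hamiltonian (Suc (2 * n)) q) T $$ (0, 2 * n)) = 1"
  obtains c t and m :: "real \<Rightarrow> int" where
    "\<forall>y\<in>path_spectrum q (Suc (2 * n)).
      y = c + t * of_int (m y) \<and> (even (m y) \<longleftrightarrow> poly (path_poly q (2 * n)) y = 1)"
proof -
  let ?Z = "path_spectrum q (Suc (2 * n))" and ?s = "poly (path_poly q (2 * n))"
  have phase: "\<forall>y\<in>?Z. of_real (?s y) * exp (\<i> * of_real (T * y))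
      = transition (path_hamiltonian (Suc (2 * n)) q) T $$ (0, 2 * n)"
    using pst_mirror_phase[OF sym pst] by blast
  have sign: "\<forall>y\<in>?Z. ?s y = 1 \<or> ?s y = -1"
    using path_poly_mirror_sign[OF sym] by (simp add: path_spectrum_def)
  have "card {y \<in> ?Z. ?s y = 1} = Suc n" and "card {y \<in> ?Z. ?s y = -1} = n"
    using mirror_path_spectrum_split[OF sym n] by simp_all
  then have "{y \<in> ?Z. ?s y = 1} \<noteq> {}" and "{y \<in> ?Z. ?s y = -1} \<noteq> {}"
    using n by (auto simp only: card.empty)
  then obtain y0 y1 where "y0 \<in> ?Z" "?s y0 = 1" and "y1 \<in> ?Z" "?s y1 = -1" by blast
  with phase sign obtain t m
    where "\<forall>y\<in>?Z. y = y0 + t * of_int (m y) \<and> (even (m y) \<longleftrightarrow> ?s y = 1)"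
    by (rule phases_quantized)
  then show ?thesis by (rule that)
qed

theorem theorem5:
  fixes n :: nat and q :: "nat \<Rightarrow> real"
  assumes "n \<ge> 2"
    and "\<forall>i \<le> 2 * n. q i = q (2 * n - i)"
  shows "\<not> (\<exists>T :: real.
           cmod (transition (path_adj (2 * n + 1) - potential (2 * n + 1) q) T $$ (0, 2 * n)) = 1)"
proof
  assume "\<exists>T :: real. cmod (transition (path_adj (2 * n + 1) - potential (2 * n + 1) q) T $$ (0, 2 * n)) = 1"
  then obtain T where pst: "cmod (transition (path_hamiltonian (Suc (2 * n)) q) T $$ (0, 2 * n)) = 1"
    by (auto simp: path_hamiltonian_def)
  have n: "n \<ge> 1" using assms(1) by simp
  let ?Z = "path_spectrum q (Suc (2 * n))" and ?s = "poly (path_poly q (2 * n))"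
  let ?A = "{x. poly (path_poly q (Suc n) - path_poly q (n - 1)) x = 0}" and ?B = "path_spectrum q n"
  have A: "{y \<in> ?Z. ?s y = 1} = ?A" and B: "{y \<in> ?Z. ?s y = -1} = ?B" and card_A: "card ?A = Suc n"
    using mirror_path_spectrum_split[OF assms(2) n] by auto
  obtain c t m where lattice: "\<forall>y\<in>?Z. y = c + t * of_int (m y) \<and> (even (m y) \<longleftrightarrow> ?s y = 1)"
    using pst_mirror_lattice[OF assms(2) n pst] by blast
  show False
  proof (rule lattice_spectrum_impossible)
    show "finite ?A" using card_A by (metis card.infinite Zero_not_Suc)
    show "\<forall>y\<in>?A \<union> ?B. y = c + t * of_int (m y)" and "\<forall>y\<in>?A. even (m y)" and "\<forall>y\<in>?B. odd (m y)"
      using lattice unfolding A[symmetric] B[symmetric] by auto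
    show "square_excess ?A ?B (\<lambda>y. y) = 4"
      using mirror_trace_identity[OF assms(1) card_A] .
    show "(\<Prod>v\<in>?B. \<Prod>u\<in>?A. v - u)^2 = 4 ^ n"
      using mirror_resultant[OF n card_A] .
  qed (use card_A assms(1) in simp_all)
qed

end
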